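(* Let $g$ be an even $C^1$ function defined in a neighbourhood of $0\in\mathbb{C}$ with $g(z)=o(z)$, and suppose $g$ satisfies the polynomial condition with respect to a polynomial $p(\zeta_1,\zeta_2)$. Then $g$ also satisfies the polynomial condition with respect to the odd part $p_{\mathrm{odd}}(\zeta_1,\zeta_2)=\tfrac12\bigl(p(\zeta_1,\zeta_2)-p(-\zeta_1,-\zeta_2)\bigr)$ of $p$ (equivalently, the sum of the homogeneous components of $p$ of odd degree).
   Context: All functions defined near the origin are assumed to be of class $C^1$. Polynomials $p(\zeta_1,\zeta_2)$ are holomorphic polynomials in two complex variables with complex coefficients. Polynomial condition: let $g$ be an even $C^1$ function defined near $0\in\mathbb{C}$ with $g(z)=o(z)$ as $z\to0$. We say $g$ satisfies the polynomial condition with respect to the polynomial $p$ if for every $C^1$ function $R$ defined near $0$ with $R(z)=o(g(z))$ as $z\to 0$, both $\operatorname{Im} p(z,\bar z+g(z)+R(z))>0$ and $\operatorname{Im} p(z,\bar z-g(z)+R(z))<0$ hold for all $z\neq0$ sufficiently close to $0$ (the neighbourhood may depend on $R$). *)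

theory Defs
  imports "HOL-Analysis.Analysis" "HOL-Library.Landau_Symbols"
begin

text \<open>C^1 near 0 (as a map of the real plane C = R^2): differentiable on a ball
  around 0 with continuous (Frechet) derivative.\<close>
definition C1_near0 :: "(complex \<Rightarrow> complex) \<Rightarrow> bool" where
  "C1_near0 f \<longleftrightarrow> (\<exists>r>0. \<exists>f' :: complex \<Rightarrow> (complex \<Rightarrow>\<^sub>L complex).
      (\<forall>z\<in>ball 0 r. (f has_derivative blinfun_apply (f' z)) (at z)) \<and>
      continuous_on (ball 0 r) f')"

definition even_near0 :: "(complex \<Rightarrow> complex) \<Rightarrow> bool" where
  "even_near0 f \<longleftrightarrow> (\<exists>r>0. \<forall>z\<in>ball 0 r. f (- z) = f z)"

definition is_poly2 :: "(complex \<Rightarrow> complex \<Rightarrow> complex) \<Rightarrow> bool" where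
  "is_poly2 p \<longleftrightarrow> (\<exists>N::nat. \<exists>c :: nat \<Rightarrow> nat \<Rightarrow> complex.
      \<forall>z w. p z w = (\<Sum>i\<le>N. \<Sum>j\<le>N. c i j * z ^ i * w ^ j))"

definition poly_odd_part :: "(complex \<Rightarrow> complex \<Rightarrow> complex) \<Rightarrow> complex \<Rightarrow> complex \<Rightarrow> complex" where
  "poly_odd_part p z w = (p z w - p (- z) (- w)) / 2"

definition polynomial_condition ::
  "(complex \<Rightarrow> complex) \<Rightarrow> (complex \<Rightarrow> complex \<Rightarrow> complex) \<Rightarrow> bool" where
  "polynomial_condition g p \<longleftrightarrow>
     (\<forall>R. C1_near0 R \<and> R \<in> o[at 0](g) \<longrightarrow>
        (\<forall>\<^sub>F z in at 0. Im (p z (cnj z + g z + R z)) > 0 \<and>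
                         Im (p z (cnj z - g z + R z)) < 0))"

end

theory Submission
  imports Defs
begin

text \<open>For an admissible perturbation R, the reflected perturbation u \<mapsto> -R(-u) is again
  admissible. Since g is even and conjugation is odd, the point reflection
  (z, w) \<mapsto> (-z, -w) carries the graph of cnj + g + R over z onto the graph of
  cnj - g + (-R(-\<cdot>)) over -z, and vice versa.\<close>

lemma eventually_at_0_reflect:
  fixes P :: "'a::real_normed_vector \<Rightarrow> bool"
  assumes "eventually P (at 0)"
  shows "eventually (\<lambda>x. P (- x)) (at 0)"
proof -
  have "filtermap uminus (at (0::'a)) = at 0"
    using filtermap_at_minus[of "0::'a"] by simp
  with assms show ?thesis
    by (metis eventually_filtermap)
qed

lemma even_near0_eventually:
  assumes "even_near0 g"
  shows "\<forall>\<^sub>F z in at 0. g (- z) = g z"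
proof -
  from assms obtain r where "r > 0" "\<forall>z\<in>ball 0 r. g (- z) = g z"
    unfolding even_near0_def by auto
  then show ?thesis
    unfolding eventually_at by (intro exI[of _ r]) (auto simp: dist_norm)
qed

lemma C1_near0_reflect:
  assumes "C1_near0 R"
  shows "C1_near0 (\<lambda>u. - R (- u))"
proof -
  from assms obtain r f' where "r > 0"
    and deriv: "\<forall>z\<in>ball 0 r. (R has_derivative blinfun_apply (f' z)) (at z)"
    and cont: "continuous_on (ball 0 r) f'"
    unfolding C1_near0_def by auto
  have "((\<lambda>u. - R (- u)) has_derivative blinfun_apply (f' (- z))) (at z)"
    if "z \<in> ball 0 r" for z
  proof -
    have "(R has_derivative blinfun_apply (f' (- z))) (at (- z))"
      using deriv that by auto
    from has_derivative_compose[OF has_derivative_minus[OF has_derivative_ident] this]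
    have "((\<lambda>u. - R (- u)) has_derivative (\<lambda>h. - blinfun_apply (f' (- z)) (- h))) (at z)"
      by (intro has_derivative_minus) (simp add: o_def)
    then show ?thesis
      by (simp add: blinfun.minus_right)
  qed
  moreover have "continuous_on (ball 0 r) (\<lambda>z. f' (- z))"
    by (rule continuous_on_compose2[OF cont continuous_on_minus[OF continuous_on_id]]) auto
  ultimately show ?thesis
    unfolding C1_near0_def using \<open>r > 0\<close>
    by (intro exI[of _ r] conjI exI[of _ "\<lambda>z. f' (- z)"]) auto
qed

lemma smallo_reflect_even:
  fixes R g :: "'a::real_normed_vector \<Rightarrow> 'b::real_normed_field"
  assumes "R \<in> o[at 0](g)" and "\<forall>\<^sub>F z in at 0. g (- z) = g z"
  shows "(\<lambda>u. - R (- u)) \<in> o[at 0](g)"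
proof -
  have "filterlim uminus (at (0::'a)) (at 0)"
    by (simp add: filterlim_def filtermap_at_minus)
  from landau_o.small.compose[OF assms(1) this]
  have "(\<lambda>u. R (- u)) \<in> o[at 0](\<lambda>u. g (- u))" .
  then show ?thesis
    using landau_o.small.cong[OF assms(2)] by simp
qed

lemma polynomial_condition_reflect:
  assumes "even_near0 g" and "polynomial_condition g p"
    and "C1_near0 R" and "R \<in> o[at 0](g)"
  shows "\<forall>\<^sub>F z in at 0. Im (p (- z) (- (cnj z + g z + R z))) < 0 \<and>
                          Im (p (- z) (- (cnj z - g z + R z))) > 0"
proof -
  define R' where "R' = (\<lambda>u. - R (- u))"
  have even: "\<forall>\<^sub>F z in at 0. g (- z) = g z"
    using assms(1) by (rule even_near0_eventually)
  have "C1_near0 R'"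
    unfolding R'_def using assms(3) by (rule C1_near0_reflect)
  moreover have "R' \<in> o[at 0](g)"
    unfolding R'_def using assms(4) even by (rule smallo_reflect_even)
  ultimately
  have "\<forall>\<^sub>F z in at 0. Im (p z (cnj z + g z + R' z)) > 0 \<and>
                                      Im (p z (cnj z - g z + R' z)) < 0"
    using assms(2) unfolding polynomial_condition_def by blast
  from eventually_at_0_reflect[OF this] even
  show ?thesis
    by eventually_elim (simp add: R'_def)
qed

lemma Im_poly_odd_part:
  "Im (poly_odd_part p z w) = (Im (p z w) - Im (p (- z) (- w))) / 2"
  by (simp add: poly_odd_part_def)

theorem lemma2p3:
  fixes g :: "complex \<Rightarrow> complex" and p :: "complex \<Rightarrow> complex \<Rightarrow> complex"
  assumes "C1_near0 g" and "even_near0 g" and "g \<in> o[at 0](\<lambda>z. z)"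
    and "is_poly2 p"
    and "polynomial_condition g p"
  shows "polynomial_condition g (poly_odd_part p)"
  unfolding polynomial_condition_def
proof (intro allI impI)
  fix R assume R: "C1_near0 R \<and> R \<in> o[at 0](g)"
  with assms(5) have "\<forall>\<^sub>F z in at 0. Im (p z (cnj z + g z + R z)) > 0 \<and>
                                      Im (p z (cnj z - g z + R z)) < 0"
    unfolding polynomial_condition_def by blast
  moreover have "\<forall>\<^sub>F z in at 0. Im (p (- z) (- (cnj z + g z + R z))) < 0 \<and>
                                 Im (p (- z) (- (cnj z - g z + R z))) > 0"
    using R by (intro polynomial_condition_reflect[OF assms(2,5)]) auto
  ultimately show "\<forall>\<^sub>F z in at 0. Im (poly_odd_part p z (cnj z + g z + R z)) > 0 \<and>
                                   Im (poly_odd_part p z (cnj z - g z + R z)) < 0"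
    by eventually_elim (simp add: Im_poly_odd_part)
qed

end
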